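(* For every $\alpha\in[\tfrac12,1)$ there is a sequence of instances $(\mathcal{T}_n,w_n)$ (finite trees with $w_n:V(\mathcal{T}_n)\to\mathbb{R}_{\ge0}$) with $w_n(\mathcal{T}_n)=1$ and $\lim_{n\to\infty}\mathtt{OPT}(\mathcal{T}_n,w_n)=\infty$, such that $$\mathtt{cent}^\alpha(\mathcal{T}_n,w_n)\ge\frac{1}{1-\alpha}\mathtt{OPT}(\mathcal{T}_n,w_n)-\frac{\alpha}{1-\alpha}.$$
   Context: For a subgraph $\mathcal{H}$ of $\mathcal{T}$, $w(\mathcal{H})=\sum_{x\in V(\mathcal{H})}w(x)$. A search tree on a tree $\mathcal{T}$ is a rooted tree $T$ with vertex set $V(\mathcal{T})$ defined recursively: its root is an arbitrary vertex $r$, and the children of $r$ are the roots of search trees built on the connected components of $\mathcal{T}-r$; a single-vertex tree has only itself as search tree. $\mathtt{cost}_w(T)=\sum_x w(x)\,\mathtt{depth}_T(x)$ with root depth $1$; $\mathtt{OPT}(\mathcal{T},w)$ is the minimum cost over all search trees on $\mathcal{T}$. For $0\le\alpha\le1$, a vertex $v$ is an $\alpha$-centroid of $(\mathcal{T},w)$ if every component $\mathcal{H}$ of $\mathcal{T}-v$ has $w(\mathcal{H})\le\alpha\, w(\mathcal{T})$. A search tree $T$ is an $\alpha$-centroid tree if every vertex $x$ is an $\alpha$-centroid of $(\mathcal{T}[V(T_x)],w)$, where $T_x$ is the subtree of $T$ rooted at $x$. $\mathtt{cent}^\alpha(\mathcal{T},w)$ is the maximum cost of an $\alpha$-centroid tree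 of $(\mathcal{T},w)$, or $0$ if none exists. *)

theory Defs
  imports Complex_Main
begin

text \<open>Undirected graphs: vertex set V and edges given as 2-element vertex sets.\<close>

definition adj :: "'a set set \<Rightarrow> 'a set \<Rightarrow> ('a \<times> 'a) set" where
  "adj E S = {(x, y). x \<in> S \<and> y \<in> S \<and> {x, y} \<in> E}"

definition comps :: "'a set set \<Rightarrow> 'a set \<Rightarrow> 'a set set" where
  "comps E S = {C. \<exists>x\<in>S. C = {y. (x, y) \<in> (adj E S)\<^sup>*}}"

definition is_tree :: "'a set \<Rightarrow> 'a set set \<Rightarrow> bool" where
  "is_tree V E \<longleftrightarrow> finite V \<and> V \<noteq> {} \<and>
     (\<forall>e\<in>E. e \<subseteq> V \<and> card e = 2) \<and>
     (\<forall>x\<in>V. \<forall>y\<in>V. (x, y) \<in> (adj E V)\<^sup>*) \<and>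
     card E = card V - 1"

definition wsum :: "('a \<Rightarrow> real) \<Rightarrow> 'a set \<Rightarrow> real" where
  "wsum w S = (\<Sum>x\<in>S. w x)"

datatype 'a stree = Node 'a "'a stree list"

fun verts :: "'a stree \<Rightarrow> 'a set" where
  "verts (Node r ts) = insert r (\<Union>t\<in>set ts. verts t)"

fun is_search_tree :: "'a set set \<Rightarrow> 'a set \<Rightarrow> 'a stree \<Rightarrow> bool" where
  "is_search_tree E S (Node r ts) \<longleftrightarrow>
     r \<in> S \<and> distinct (map verts ts) \<and> set (map verts ts) = comps E (S - {r}) \<and>
     (\<forall>t\<in>set ts. is_search_tree E (verts t) t)"

text \<open>Vertices with their depths (root has depth 1).\<close>
fun depths :: "'a stree \<Rightarrow> ('a \<times> nat) list" where
  "depths (Node r ts) = (r, 1) # concat (map (\<lambda>t. map (\<lambda>(x, d). (x, Suc d)) (depths t)) ts)"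

definition cost :: "('a \<Rightarrow> real) \<Rightarrow> 'a stree \<Rightarrow> real" where
  "cost w T = sum_list (map (\<lambda>(x, d). w x * real d) (depths T))"

definition OPT :: "'a set \<Rightarrow> 'a set set \<Rightarrow> ('a \<Rightarrow> real) \<Rightarrow> real" where
  "OPT V E w = Inf {cost w T | T. is_search_tree E V T}"

fun subtrees :: "'a stree \<Rightarrow> 'a stree list" where
  "subtrees (Node r ts) = Node r ts # concat (map subtrees ts)"

fun root :: "'a stree \<Rightarrow> 'a" where
  "root (Node r ts) = r"

definition is_centroid :: "real \<Rightarrow> 'a set set \<Rightarrow> ('a \<Rightarrow> real) \<Rightarrow> 'a set \<Rightarrow> 'a \<Rightarrow> bool" where
  "is_centroid \<alpha> E w S v \<longleftrightarrow> v \<in> S \<and> (\<forall>C\<in>comps E (S - {v}). wsum w C \<le> \<alpha> * wsum w S)"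

definition is_centroid_tree :: "real \<Rightarrow> 'a set set \<Rightarrow> ('a \<Rightarrow> real) \<Rightarrow> 'a set \<Rightarrow> 'a stree \<Rightarrow> bool" where
  "is_centroid_tree \<alpha> E w V T \<longleftrightarrow> is_search_tree E V T \<and>
     (\<forall>s\<in>set (subtrees T). is_centroid \<alpha> E w (verts s) (root s))"

definition cent :: "real \<Rightarrow> 'a set \<Rightarrow> 'a set set \<Rightarrow> ('a \<Rightarrow> real) \<Rightarrow> real" where
  "cent \<alpha> V E w = (let C = {cost w T | T. is_centroid_tree \<alpha> E w V T} in
     if C = {} then 0 else Sup C)"

end

theory Submission
  imports Defs
begin

text \<open>The level-\<open>n\<close> instance is built recursively: two copies of level \<open>n - 1\<close> hang off a
  middle vertex of weight zero, the left copy receiving the share \<open>\<alpha>\<close> and the right copy the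
  share \<open>1 - \<alpha>\<close> of the weight. Since \<open>1 - \<alpha> \<le> \<alpha>\<close>, querying the middle vertices gives an
  \<open>\<alpha>\<close>-centroid tree, and it pushes every weighted vertex down to depth \<open>n + 1\<close>: its cost is
  \<open>1 + n\<close>. Querying instead the first vertex of each block leaves the heavy left copy at
  the same depth and lets only the right copy sink, for a cost of \<open>1 + n (1 - \<alpha>)\<close>; conversely,
  at every level some half of every block sinks, and the lighter one is the right half, so this
  is optimal. Hence \<open>cent \<ge> 1 + n = (OPT - \<alpha>) / (1 - \<alpha>)\<close>, and \<open>OPT\<close> grows linearly.\<close>

lemma adj_mono: "E \<subseteq> E' \<Longrightarrow> S \<subseteq> S' \<Longrightarrow> adj E S \<subseteq> adj E' S'"
  unfolding adj_def by auto

lemma sym_adj: "sym (adj E S)"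
  unfolding adj_def sym_def by (auto simp: insert_commute)

lemma rtrancl_adj_in: "(x, y) \<in> (adj E S)\<^sup>* \<Longrightarrow> x = y \<or> y \<in> S"
  by (induction rule: rtrancl_induct) (auto simp: adj_def)

lemma comps_subset: "C \<in> comps E S \<Longrightarrow> C \<subseteq> S"
  unfolding comps_def using rtrancl_adj_in[of _ _ E S] by auto

lemma Union_comps: "\<Union>(comps E S) = S"
proof
  show "\<Union> (comps E S) \<subseteq> S" using comps_subset by blast
  show "S \<subseteq> \<Union> (comps E S)" unfolding comps_def by blast
qed

lemma comps_disjoint:
  assumes "C \<in> comps E S" "D \<in> comps E S" "C \<noteq> D"
  shows "C \<inter> D = {}"
proof (rule ccontr)
  let ?r = "(adj E S)\<^sup>*"
  obtain x y where C: "C = {z. (x, z) \<in> ?r}" and D: "D = {z. (y, z) \<in> ?r}"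
    using assms(1,2) unfolding comps_def by blast
  assume "C \<inter> D \<noteq> {}"
  then obtain z where xz: "(x, z) \<in> ?r" and yz: "(y, z) \<in> ?r" using C D by blast
  have "sym ?r" using sym_adj by (rule sym_rtrancl)
  then have "(z, x) \<in> ?r" "(z, y) \<in> ?r" using xz yz by (auto dest: symD)
  then have "(x, y) \<in> ?r" "(y, x) \<in> ?r"
    using rtrancl_trans[OF xz] rtrancl_trans[OF yz] by blast+
  then have "C = D" unfolding C D using rtrancl_trans by (metis (no_types, lifting))
  with assms(3) show False by contradiction
qed

lemma comps_eq_singleton:
  assumes "S \<noteq> {}" "\<forall>x\<in>S. \<forall>y\<in>S. (x, y) \<in> (adj E S)\<^sup>*"
  shows "comps E S = {S}"
proof -
  have "{y. (x, y) \<in> (adj E S)\<^sup>*} = S" if "x \<in> S" for x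
    using that assms(2) rtrancl_adj_in[of x _ E S] by blast
  then show ?thesis using assms(1) unfolding comps_def by auto
qed

lemma comps_empty [simp]: "comps E {} = {}"
  unfolding comps_def by auto

lemma comps_singleton [simp]: "comps E {x} = {{x}}"
  by (rule comps_eq_singleton) auto

lemma rtrancl_adj_Un_no_edges:
  assumes "x \<in> A" "A \<inter> B = {}" "\<forall>u\<in>A. \<forall>v\<in>B. {u, v} \<notin> E"
  shows "(x, y) \<in> (adj E (A \<union> B))\<^sup>* \<longleftrightarrow> (x, y) \<in> (adj E A)\<^sup>*"
proof
  assume "(x, y) \<in> (adj E (A \<union> B))\<^sup>*"
  then show "(x, y) \<in> (adj E A)\<^sup>*"
  proof (induction rule: rtrancl_induct)
    case (step y z)
    have "y \<in> A" using step.IH assms(1) rtrancl_adj_in by metis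
    moreover have "z \<in> A \<union> B" "{y, z} \<in> E" using step.hyps(2) unfolding adj_def by auto
    ultimately have "(y, z) \<in> adj E A" using assms(3) unfolding adj_def by blast
    then show ?case using step.IH by auto
  qed simp
next
  assume "(x, y) \<in> (adj E A)\<^sup>*"
  then show "(x, y) \<in> (adj E (A \<union> B))\<^sup>*"
    using rtrancl_mono[OF adj_mono[of E E A "A \<union> B"]] by blast
qed

lemma comps_Un_no_edges:
  assumes "A \<inter> B = {}" "\<forall>u\<in>A. \<forall>v\<in>B. {u, v} \<notin> E"
  shows "comps E (A \<union> B) = comps E A \<union> comps E B"
proof -
  have "\<forall>u\<in>B. \<forall>v\<in>A. {u, v} \<notin> E" using assms(2) by (metis insert_commute)
  then have "{y. (x, y) \<in> (adj E (A \<union> B))\<^sup>*} = {y. (x, y) \<in> (adj E B)\<^sup>*}" if "x \<in> B" for x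
    using rtrancl_adj_Un_no_edges[of x B A E] that assms(1) by (auto simp: Un_commute Int_commute)
  moreover have "{y. (x, y) \<in> (adj E (A \<union> B))\<^sup>*} = {y. (x, y) \<in> (adj E A)\<^sup>*}" if "x \<in> A" for x
    using rtrancl_adj_Un_no_edges[OF that assms] by blast
  ultimately show ?thesis unfolding comps_def by blast
qed

lemma connected_subset_in_comp:
  assumes "A \<subseteq> S" "x \<in> A" "\<forall>u\<in>A. \<forall>v\<in>A. (u, v) \<in> (adj E A)\<^sup>*"
  shows "\<exists>C\<in>comps E S. A \<subseteq> C"
proof -
  have "(adj E A)\<^sup>* \<subseteq> (adj E S)\<^sup>*" using assms(1) by (intro rtrancl_mono adj_mono) auto
  then have "A \<subseteq> {y. (x, y) \<in> (adj E S)\<^sup>*}" using assms(2,3) by blast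
  then show ?thesis using assms(1,2) unfolding comps_def by blast
qed

lemma connected_if_reaches_all:
  assumes "\<forall>y\<in>S. (c, y) \<in> (adj E S)\<^sup>*"
  shows "\<forall>x\<in>S. \<forall>y\<in>S. (x, y) \<in> (adj E S)\<^sup>*"
proof (intro ballI)
  fix x y assume "x \<in> S" "y \<in> S"
  have "sym ((adj E S)\<^sup>*)" using sym_adj by (rule sym_rtrancl)
  then have "(x, c) \<in> (adj E S)\<^sup>*" using assms \<open>x \<in> S\<close> by (blast dest: symD)
  then show "(x, y) \<in> (adj E S)\<^sup>*" using assms \<open>y \<in> S\<close> rtrancl_trans by fast
qed

lemma search_tree_verts: "is_search_tree E S T \<Longrightarrow> verts T = S"
proof (induction T arbitrary: S)
  case (Node r ts)
  have "(\<Union>t\<in>set ts. verts t) = \<Union>(comps E (S - {r}))" using Node.prems by simp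
  then show ?case using Node.prems Union_comps[of E "S - {r}"] by auto
qed

lemma fst_set_depths: "fst ` set (depths T) = verts T"
  by (induction T) (auto simp: image_iff case_prod_unfold, force+)

lemma length_depths_search_tree:
  assumes "is_search_tree E S T" "finite S"
  shows "length (depths T) = card S"
  using assms
proof (induction T arbitrary: S)
  case (Node r ts)
  let ?CS = "comps E (S - {r})"
  have r: "r \<in> S" and dist: "distinct (map verts ts)" and cs: "verts ` set ts = ?CS"
    using Node.prems(1) by auto
  have "card S > 0" using r Node.prems(2) card_gt_0_iff by blast
  have fin: "finite C" if "C \<in> ?CS" for C
    using comps_subset[OF that] Node.prems(2) by (meson finite_Diff finite_subset)
  have "length (depths t) = card (verts t)" if t: "t \<in> set ts" for t
  proof -
    have "is_search_tree E (verts t) t" using Node.prems(1) t by simp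
    moreover have "finite (verts t)" using fin cs t by blast
    ultimately show ?thesis using Node.IH[OF t] by blast
  qed
  then have "length (depths (Node r ts)) = 1 + sum_list (map card (map verts ts))"
    by (simp add: length_concat o_def cong: map_cong)
  also have "\<dots> = 1 + sum card ?CS"
    using sum_list_distinct_conv_sum_set[OF dist, of card] cs by simp
  also have "\<dots> = 1 + card (\<Union>?CS)"
    using card_Union_disjoint[OF _ fin] comps_disjoint[of _ E "S - {r}"]
    by (simp add: pairwise_def disjnt_def)
  also have "\<dots> = card S"
    using r Node.prems(2) \<open>card S > 0\<close> by (simp add: Union_comps card_Diff_singleton)
  finally show ?case .
qed

lemma distinct_depths_search_tree:
  "is_search_tree E S T \<Longrightarrow> finite S \<Longrightarrow> distinct (map fst (depths T))"
  by (rule card_distinct)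
    (simp add: length_depths_search_tree fst_set_depths search_tree_verts flip: image_set)

lemma depth_le_card_search_tree:
  "is_search_tree E S T \<Longrightarrow> finite S \<Longrightarrow> (x, d) \<in> set (depths T) \<Longrightarrow> d \<le> card S"
proof (induction T arbitrary: S x d)
  case (Node r ts)
  have r: "r \<in> S" using Node.prems(1) by simp
  show ?case
  proof (cases "(x, d) = (r, 1)")
    case True
    moreover have "card S > 0" using r Node.prems(2) card_gt_0_iff by blast
    ultimately show ?thesis by simp
  next
    case False
    then obtain t d' where t: "t \<in> set ts" "(x, d') \<in> set (depths t)" "d = Suc d'"
      using Node.prems(3) by auto
    have sub: "verts t \<subseteq> S - {r}" using Node.prems(1) t(1) comps_subset by fastforce
    then have "card (verts t) \<le> card S - 1"
      using r Node.prems(2) card_mono[OF _ sub] by (simp add: card_Diff_singleton)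
    moreover have "d' \<le> card (verts t)"
    proof (rule Node.IH[OF t(1) _ _ t(2)])
      show "is_search_tree E (verts t) t" using Node.prems(1) t(1) by simp
      show "finite (verts t)" using sub Node.prems(2) finite_subset by blast
    qed
    moreover have "card S > 0" using r Node.prems(2) card_gt_0_iff by blast
    ultimately show ?thesis using t(3) by linarith
  qed
qed

definition tree_weight :: "('a \<Rightarrow> real) \<Rightarrow> 'a stree \<Rightarrow> real" where
  "tree_weight w T = sum_list (map (\<lambda>(x, d). w x) (depths T))"

lemma tree_weight_search_tree:
  assumes "is_search_tree E S T" "finite S"
  shows "tree_weight w T = wsum w S"
proof -
  have "tree_weight w T = sum_list (map w (map fst (depths T)))"
    unfolding tree_weight_def by (simp add: case_prod_unfold o_def)
  also have "\<dots> = sum w (verts T)"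
    using distinct_depths_search_tree[OF assms] fst_set_depths[of T]
    by (metis sum_list_distinct_conv_sum_set set_map)
  finally show ?thesis using search_tree_verts[OF assms(1)] by (simp add: wsum_def)
qed

lemma cost_le_card_mult_wsum:
  assumes "is_search_tree E S T" "finite S" "\<forall>x. 0 \<le> w x"
  shows "cost w T \<le> real (card S) * wsum w S"
proof -
  have "cost w T \<le> sum_list (map (\<lambda>(x, d). w x * real (card S)) (depths T))"
    unfolding cost_def using depth_le_card_search_tree[OF assms(1,2)] assms(3)
    by (intro sum_list_mono) (auto intro: mult_left_mono)
  also have "\<dots> = real (card S) * tree_weight w T"
    unfolding tree_weight_def by (simp add: case_prod_unfold sum_list_const_mult mult.commute)
  finally show ?thesis using tree_weight_search_tree[OF assms(1,2)] by simp
qed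

lemma sum_list_concat: "sum_list (concat xss) = sum_list (map sum_list xss)"
  by (induction xss) auto

lemma cost_Node: "cost w (Node r ts) = w r + sum_list (map (\<lambda>t. cost w t + tree_weight w t) ts)"
proof -
  have "sum_list (map (\<lambda>(x, d). w x * real d) (map (\<lambda>(x, d). (x, Suc d)) L))
        = sum_list (map (\<lambda>(x, d). w x * real d) L) + sum_list (map (\<lambda>(x, d). w x) L)" for L
    by (induction L) (auto simp: algebra_simps)
  then show ?thesis
    unfolding cost_def tree_weight_def by (simp add: map_concat sum_list_concat o_def)
qed

lemma tree_weight_Node: "tree_weight w (Node r ts) = w r + sum_list (map (tree_weight w) ts)"
  unfolding tree_weight_def by (simp add: map_concat sum_list_concat o_def case_prod_unfold)

lemma cost_add: "cost (\<lambda>x. f x + g x) T = cost f T + cost g T"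
  unfolding cost_def by (simp add: case_prod_unfold algebra_simps sum_list_addf)

lemma tree_weight_add: "tree_weight (\<lambda>x. f x + g x) T = tree_weight f T + tree_weight g T"
  unfolding tree_weight_def by (simp add: case_prod_unfold sum_list_addf)

lemma cost_cong: "\<forall>x\<in>verts T. v x = w x \<Longrightarrow> cost v T = cost w T"
  unfolding cost_def using fst_set_depths[of T]
  by (intro arg_cong[where f = sum_list] map_cong) force+

lemma tree_weight_cong: "\<forall>x\<in>verts T. v x = w x \<Longrightarrow> tree_weight v T = tree_weight w T"
  unfolding tree_weight_def using fst_set_depths[of T]
  by (intro arg_cong[where f = sum_list] map_cong) force+

lemma cost_eq_0: "\<forall>x\<in>verts T. w x = 0 \<Longrightarrow> cost w T = 0"
  using cost_cong[of T w "\<lambda>_. 0"] by (simp add: cost_def case_prod_unfold)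

lemma tree_weight_eq_0: "\<forall>x\<in>verts T. w x = 0 \<Longrightarrow> tree_weight w T = 0"
  using tree_weight_cong[of T w "\<lambda>_. 0"] by (simp add: tree_weight_def case_prod_unfold)

lemma cost_snoc: "cost w (Node r (ts @ [t])) = cost w (Node r ts) + cost w t + tree_weight w t"
  by (simp add: cost_Node)

lemma tree_weight_snoc: "tree_weight w (Node r (ts @ [t])) = tree_weight w (Node r ts) + tree_weight w t"
  by (simp add: tree_weight_Node)

lemma tree_weight_le_cost: "\<forall>x. 0 \<le> w x \<Longrightarrow> tree_weight w T \<le> cost w T"
proof -
  have "1 \<le> d" if "(x, d) \<in> set (depths T)" for x d
    using that by (induction T arbitrary: x d) auto
  moreover assume "\<forall>x. 0 \<le> w x"
  ultimately have "w x \<le> w x * real d" if "(x, d) \<in> set (depths T)" for x d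
    using that mult_left_mono[of 1 "real d" "w x"] by simp
  then show ?thesis
    unfolding tree_weight_def cost_def by (intro sum_list_mono) auto
qed

lemma tree_weight_nonneg: "\<forall>x. 0 \<le> w x \<Longrightarrow> 0 \<le> tree_weight w T"
  unfolding tree_weight_def by (rule sum_list_nonneg) auto

lemma cost_nonneg: "\<forall>x. 0 \<le> w x \<Longrightarrow> 0 \<le> cost w T"
  unfolding cost_def by (rule sum_list_nonneg) auto

definition weight_on :: "('a \<Rightarrow> real) \<Rightarrow> 'a set \<Rightarrow> 'a \<Rightarrow> real" where
  "weight_on w A x = (if x \<in> A then w x else 0)"

lemma weight_on_nonneg: "\<forall>x. 0 \<le> w x \<Longrightarrow> \<forall>x. 0 \<le> weight_on w A x"
  by (simp add: weight_on_def)

lemma cost_weight_on_Un: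
  assumes "A \<inter> B = {}"
  shows "cost (weight_on w (A \<union> B)) T = cost (weight_on w A) T + cost (weight_on w B) T"
proof -
  have "weight_on w (A \<union> B) = (\<lambda>x. weight_on w A x + weight_on w B x)"
    using assms by (auto simp: weight_on_def fun_eq_iff)
  then show ?thesis by (simp add: cost_add)
qed

lemma wsum_weight_on: "A \<subseteq> S \<Longrightarrow> finite S \<Longrightarrow> wsum (weight_on w A) S = wsum w A"
  unfolding wsum_def weight_on_def using sum.inter_restrict[of S w A] by (simp add: Int_absorb1)

lemma wsum_le_cost_weight_on:
  assumes "is_search_tree E S T" "finite S" "\<forall>x. 0 \<le> w x" "A \<subseteq> S"
  shows "wsum w A \<le> cost (weight_on w A) T"
  using tree_weight_le_cost[OF weight_on_nonneg[OF assms(3)], of A T]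
  by (simp add: tree_weight_search_tree[OF assms(1,2)] wsum_weight_on[OF assms(4,2)])

lemma connected_subset_in_child:
  assumes "is_search_tree E S (Node r ts)" "A \<subseteq> S" "r \<notin> A" "x \<in> A"
    and "\<forall>u\<in>A. \<forall>v\<in>A. (u, v) \<in> (adj E A)\<^sup>*"
  shows "\<exists>t\<in>set ts. A \<subseteq> verts t"
proof -
  have "A \<subseteq> S - {r}" using assms(2,3) by blast
  then obtain C where "C \<in> comps E (S - {r})" "A \<subseteq> C"
    using connected_subset_in_comp[OF _ assms(4,5)] by blast
  moreover have "comps E (S - {r}) = verts ` set ts" using assms(1) by simp
  ultimately show ?thesis by force
qed

lemma cost_weight_on_child:
  assumes "is_search_tree E S (Node r ts)" "finite S" "\<forall>x. 0 \<le> w x"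
    and "t \<in> set ts" "A \<subseteq> verts t" "r \<notin> A"
  shows "cost (weight_on w A) t + wsum w A \<le> cost (weight_on w A) (Node r ts)"
proof -
  let ?v = "weight_on w A"
  let ?f = "\<lambda>u. cost ?v u + tree_weight ?v u"
  have t: "is_search_tree E (verts t) t" using assms(1,4) by simp
  have "verts t \<subseteq> S" using assms(1,4) comps_subset by fastforce
  then have fin: "finite (verts t)" using assms(2) finite_subset by blast
  have "0 \<le> ?f u" for u
    using cost_nonneg[of ?v] tree_weight_nonneg[of ?v] weight_on_nonneg[OF assms(3)] by force
  then have "?f t \<le> ?f t + sum_list (map ?f (remove1 t ts))"
    using sum_list_nonneg[of "map ?f (remove1 t ts)"] by auto
  also have "\<dots> = sum_list (map ?f ts)"
    by (rule sum_list_map_remove1[OF assms(4), symmetric])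
  finally have "?f t \<le> sum_list (map ?f ts)" .
  moreover have "tree_weight ?v t = wsum w A"
    using tree_weight_search_tree[OF t fin] wsum_weight_on[OF assms(5) fin] by simp
  ultimately show ?thesis unfolding cost_Node using assms(6) by (simp add: weight_on_def)
qed

lemma cost_weight_on_root_notin:
  assumes "is_search_tree E S (Node r ts)" "finite S" "\<forall>x. 0 \<le> w x"
    and "A \<subseteq> S" "r \<notin> A" "x \<in> A" "\<forall>u\<in>A. \<forall>v\<in>A. (u, v) \<in> (adj E A)\<^sup>*"
    and "\<And>t. is_search_tree E (verts t) t \<Longrightarrow> finite (verts t) \<Longrightarrow> A \<subseteq> verts t
      \<Longrightarrow> c \<le> cost (weight_on w A) t"
  shows "c + wsum w A \<le> cost (weight_on w A) (Node r ts)"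
proof -
  obtain t where t: "t \<in> set ts" "A \<subseteq> verts t"
    using connected_subset_in_child[OF assms(1,4-7)] by blast
  have "verts t \<subseteq> S" using assms(1) t(1) comps_subset by fastforce
  then have "finite (verts t)" using assms(2) finite_subset by blast
  moreover have "is_search_tree E (verts t) t" using assms(1) t(1) by simp
  ultimately have "c \<le> cost (weight_on w A) t" using assms(8) t(2) by blast
  then show ?thesis using cost_weight_on_child[OF assms(1-3) t assms(5)] by linarith
qed

text \<open>The instance of level \<open>j\<close> lives on the interval \<open>block j off\<close>: a copy of level
  \<open>j - 1\<close>, the vertex \<open>mid (j - 1) off\<close>, and a second copy, with the middle vertex joined to
  the first vertex of each copy.\<close>

fun block_size :: "nat \<Rightarrow> nat" where
  "block_size 0 = 1"
| "block_size (Suc j) = 2 * block_size j + 1"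

abbreviation mid :: "nat \<Rightarrow> nat \<Rightarrow> nat" where
  "mid j off \<equiv> off + block_size j"

definition block :: "nat \<Rightarrow> nat \<Rightarrow> nat set" where
  "block j off = {off..<off + block_size j}"

fun block_edges :: "nat \<Rightarrow> nat \<Rightarrow> nat set set" where
  "block_edges 0 off = {}"
| "block_edges (Suc j) off = block_edges j off \<union> block_edges j (Suc (mid j off))
     \<union> {{off, mid j off}, {mid j off, Suc (mid j off)}}"

fun block_weight :: "real \<Rightarrow> nat \<Rightarrow> nat \<Rightarrow> real \<Rightarrow> nat \<Rightarrow> real" where
  "block_weight a 0 off s x = (if x = off then s else 0)"
| "block_weight a (Suc j) off s x =
     block_weight a j off (a * s) x + block_weight a j (Suc (mid j off)) ((1 - a) * s) x"

text \<open>The blocks met when unfolding the level-\<open>K\<close> instance, each with the weight it carries.\<close>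

inductive subblock :: "real \<Rightarrow> nat \<Rightarrow> nat \<Rightarrow> nat \<Rightarrow> real \<Rightarrow> bool" for a K where
  top: "subblock a K K 0 1"
| left: "subblock a K (Suc j) off s \<Longrightarrow> subblock a K j off (a * s)"
| right: "subblock a K (Suc j) off s \<Longrightarrow> subblock a K j (Suc (mid j off)) ((1 - a) * s)"

lemma block_size_pos: "1 \<le> block_size j"
  by (induction j) auto

lemma offset_in_block [simp]: "off \<in> block j off"
  using block_size_pos[of j] by (auto simp: block_def)

lemma block_Suc: "block (Suc j) off = block j off \<union> {mid j off} \<union> block j (Suc (mid j off))"
  by (auto simp: block_def)

lemma mid_notin_left [simp]: "mid j off \<notin> block j off"
  by (auto simp: block_def)

lemma mid_notin_right [simp]: "mid j off \<notin> block j (Suc (mid j off))"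
  by (auto simp: block_def)

lemma offset_notin_right [simp]: "off \<notin> block j (Suc (mid j off))"
  by (auto simp: block_def)

lemma left_right_disjoint: "block j off \<inter> block j (Suc (mid j off)) = {}"
  by (auto simp: block_def)

lemma finite_block [simp]: "finite (block j off)"
  by (simp add: block_def)

lemma card_block: "card (block j off) = block_size j"
  by (simp add: block_def)

lemma block_edges_subset: "e \<in> block_edges j off \<Longrightarrow> e \<subseteq> block j off \<and> card e = 2"
proof (induction j arbitrary: off)
  case (Suc j)
  then show ?case using block_size_pos[of j] by (auto simp: block_Suc)
qed simp

lemma finite_block_edges: "finite (block_edges j off)"
  by (induction j arbitrary: off) auto

lemma card_block_edges: "card (block_edges j off) = block_size j - 1"
proof (induction j arbitrary: off)
  case (Suc j)
  let ?m = "mid j off" and ?o = "Suc (mid j off)"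
  let ?LR = "block_edges j off \<union> block_edges j ?o"
  have "e \<notin> block_edges j ?o" if "e \<in> block_edges j off" for e
  proof
    assume "e \<in> block_edges j ?o"
    then have "e \<subseteq> block j off \<inter> block j ?o" "card e = 2"
      using that block_edges_subset by blast+
    then show False using left_right_disjoint[of j off] by auto
  qed
  then have "card ?LR = card (block_edges j off) + card (block_edges j ?o)"
    using finite_block_edges by (intro card_Un_disjoint) auto
  moreover have "{off, ?m} \<notin> ?LR" "{?m, ?o} \<notin> ?LR"
    using block_edges_subset[of _ j off] block_edges_subset[of _ j ?o] by fastforce+
  moreover have "{off, ?m} \<noteq> {?m, ?o}" by (auto simp: doubleton_eq_iff)
  ultimately show ?case
    using Suc.IH block_size_pos[of j] finite_block_edges
    by (simp add: card_insert_if insert_commute)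
qed simp

lemma block_connected:
  "\<forall>x\<in>block j off. \<forall>y\<in>block j off. (x, y) \<in> (adj (block_edges j off) (block j off))\<^sup>*"
proof (induction j arbitrary: off)
  case (Suc j)
  let ?m = "mid j off" and ?o = "Suc (mid j off)"
  let ?r = "adj (block_edges (Suc j) off) (block (Suc j) off)"
  have mono: "(adj (block_edges j off') (block j off'))\<^sup>* \<subseteq> ?r\<^sup>*" if "off' \<in> {off, ?o}" for off'
    using that by (intro rtrancl_mono adj_mono) (auto simp: block_Suc)
  have edges: "(off, ?m) \<in> ?r" "(?m, ?o) \<in> ?r" by (auto simp: adj_def block_Suc)
  have "(off, y) \<in> ?r\<^sup>*" if y: "y \<in> block (Suc j) off" for y
  proof -
    consider "y \<in> block j off" | "y = ?m" | "y \<in> block j ?o"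
      using y unfolding block_Suc by blast
    then show ?thesis
    proof cases
      case 1
      then have "(off, y) \<in> (adj (block_edges j off) (block j off))\<^sup>*"
        using Suc.IH[of off] by simp
      then show ?thesis using mono[of off] by blast
    next
      case 2
      then show ?thesis using edges by (simp add: r_into_rtrancl)
    next
      case 3
      then have "(?o, y) \<in> (adj (block_edges j ?o) (block j ?o))\<^sup>*"
        using Suc.IH[of ?o] by simp
      then have "(?o, y) \<in> ?r\<^sup>*" using mono[of ?o] by blast
      then show ?thesis using edges by (meson converse_rtrancl_into_rtrancl)
    qed
  qed
  then show ?case by (intro connected_if_reaches_all ballI)
qed (simp add: block_def)

lemma block_weight_outside: "x \<notin> block j off \<Longrightarrow> block_weight a j off s x = 0"
  by (induction j arbitrary: off s) (auto simp: block_Suc)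

lemma block_weight_nonneg: "0 \<le> a \<Longrightarrow> a \<le> 1 \<Longrightarrow> 0 \<le> s \<Longrightarrow> 0 \<le> block_weight a j off s x"
  by (induction j arbitrary: off s) auto

lemma sum_block_weight: "sum (block_weight a j off s) (block j off) = s"
proof (induction j arbitrary: off s)
  case (Suc j)
  let ?o = "Suc (mid j off)" and ?B = "block (Suc j) off"
  have "sum (block_weight a j off (a * s)) ?B = sum (block_weight a j off (a * s)) (block j off)"
    "sum (block_weight a j ?o ((1 - a) * s)) ?B = sum (block_weight a j ?o ((1 - a) * s)) (block j ?o)"
    by (auto intro: sum.mono_neutral_right simp: block_Suc block_weight_outside)
  then show ?case using Suc.IH by (simp add: sum.distrib algebra_simps)
qed (simp add: block_def)

lemma subblock_subset:
  "subblock a K j off s \<Longrightarrow> block_edges j off \<subseteq> block_edges K 0 \<and> block j off \<subseteq> block K 0"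
  by (induction rule: subblock.induct) (auto simp: block_Suc)

lemma subblock_scale_nonneg: "subblock a K j off s \<Longrightarrow> 0 \<le> a \<Longrightarrow> a \<le> 1 \<Longrightarrow> 0 \<le> s"
  by (induction rule: subblock.induct) auto

lemma subblock_weight:
  "subblock a K j off s \<Longrightarrow> x \<in> block j off \<Longrightarrow> block_weight a K 0 1 x = block_weight a j off s x"
proof (induction rule: subblock.induct)
  case (left j off s)
  then show ?case
    using block_weight_outside[of x j "Suc (mid j off)"] left_right_disjoint[of j off]
    by (auto simp: block_Suc)
next
  case (right j off s)
  then show ?case
    using block_weight_outside[of x j off] left_right_disjoint[of j off] by (auto simp: block_Suc)
qed simp

lemma wsum_subblock: "subblock a K j off s \<Longrightarrow> wsum (block_weight a K 0 1) (block j off) = s"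
  using sum_block_weight[of a j off s] subblock_weight unfolding wsum_def
  by (metis (no_types, lifting) sum.cong)

lemma subblock_edge:
  "subblock a K j off s \<Longrightarrow> e \<in> block_edges K 0 \<Longrightarrow> e \<subseteq> block j off \<Longrightarrow> e \<in> block_edges j off"
proof (induction arbitrary: e rule: subblock.induct)
  case (left j off s)
  obtain x where "x \<in> e" using block_edges_subset[OF left.prems(1)] by fastforce
  then have "\<not> e \<subseteq> block j (Suc (mid j off))"
    using left.prems(2) left_right_disjoint[of j off] by blast
  moreover have "e \<noteq> {off, mid j off}" "e \<noteq> {mid j off, Suc (mid j off)}"
    using left.prems(2) by auto
  moreover have "e \<in> block_edges (Suc j) off" using left by (auto simp: block_Suc)
  ultimately show ?case using block_edges_subset[of e j "Suc (mid j off)"] by auto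
next
  case (right j off s)
  obtain x where "x \<in> e" using block_edges_subset[OF right.prems(1)] by fastforce
  then have "\<not> e \<subseteq> block j off"
    using right.prems(2) left_right_disjoint[of j off] by blast
  moreover have "e \<noteq> {off, mid j off}" "e \<noteq> {mid j off, Suc (mid j off)}"
    using right.prems(2) by auto
  moreover have "e \<in> block_edges (Suc j) off" using right by (auto simp: block_Suc)
  ultimately show ?case using block_edges_subset[of e j off] by auto
qed simp

lemma subblock_edge_cases:
  assumes "subblock a K (Suc j) off s" "{x, y} \<in> block_edges K 0"
    and "x \<in> block (Suc j) off" "y \<in> block (Suc j) off"
  shows "{x, y} \<subseteq> block j off \<or> {x, y} \<subseteq> block j (Suc (mid j off))
    \<or> {x, y} = {off, mid j off} \<or> {x, y} = {mid j off, Suc (mid j off)}"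
proof -
  have "{x, y} \<in> block_edges (Suc j) off" using subblock_edge[OF assms(1,2)] assms(3,4) by auto
  then show ?thesis using block_edges_subset by auto
qed

lemma no_edge_left_right:
  assumes "subblock a K (Suc j) off s" "x \<in> block j off" "y \<in> block j (Suc (mid j off))"
  shows "{x, y} \<notin> block_edges K 0"
proof
  assume e: "{x, y} \<in> block_edges K 0"
  have "x \<in> block (Suc j) off" "y \<in> block (Suc j) off" using assms by (auto simp: block_Suc)
  note cases = subblock_edge_cases[OF assms(1) e this]
  have "x \<notin> block j (Suc (mid j off))" "y \<notin> block j off"
    using assms(2,3) left_right_disjoint[of j off] by blast+
  moreover have "x \<noteq> mid j off" "y \<noteq> mid j off" "y \<noteq> off" using assms(2,3) by auto
  ultimately show False using cases assms(2,3) by (auto simp: doubleton_eq_iff)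
qed

lemma no_edge_left_mid_right:
  assumes "subblock a K (Suc j) off s" "x \<in> block j off" "x \<noteq> off"
    and "y \<in> insert (mid j off) (block j (Suc (mid j off)))"
  shows "{x, y} \<notin> block_edges K 0"
proof
  assume e: "{x, y} \<in> block_edges K 0"
  have "x \<in> block (Suc j) off" "y \<in> block (Suc j) off" using assms by (auto simp: block_Suc)
  note cases = subblock_edge_cases[OF assms(1) e this]
  have "x \<notin> block j (Suc (mid j off))" "y \<notin> block j off"
    using assms(2,4) left_right_disjoint[of j off] by auto
  moreover have "x \<noteq> mid j off" "x \<noteq> Suc (mid j off)" using assms(2) by (auto simp: block_def)
  ultimately show False using cases assms(3) by (auto simp: doubleton_eq_iff)
qed

lemma no_edge_right_mid:
  assumes "subblock a K (Suc j) off s" "x \<in> block j (Suc (mid j off))" "x \<noteq> Suc (mid j off)"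
  shows "{x, mid j off} \<notin> block_edges K 0"
proof
  assume e: "{x, mid j off} \<in> block_edges K 0"
  have "x \<in> block (Suc j) off" "mid j off \<in> block (Suc j) off" using assms by (auto simp: block_Suc)
  note cases = subblock_edge_cases[OF assms(1) e this]
  have "x \<noteq> off" using assms(2) by (auto simp: block_def)
  then show False using cases assms(3) by (auto simp: doubleton_eq_iff)
qed

lemma subblock_connected:
  assumes "subblock a K j off s"
  shows "\<forall>x\<in>block j off. \<forall>y\<in>block j off. (x, y) \<in> (adj (block_edges K 0) (block j off))\<^sup>*"
proof -
  have "(adj (block_edges j off) (block j off))\<^sup>* \<subseteq> (adj (block_edges K 0) (block j off))\<^sup>*"
    using subblock_subset[OF assms] by (intro rtrancl_mono adj_mono) auto
  then show ?thesis using block_connected by blast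
qed

lemma comps_subblock: "subblock a K j off s \<Longrightarrow> comps (block_edges K 0) (block j off) = {block j off}"
  using subblock_connected offset_in_block by (intro comps_eq_singleton) blast+

lemma comps_subblock_minus_mid:
  assumes "subblock a K (Suc j) off s"
  shows "comps (block_edges K 0) (block (Suc j) off - {mid j off})
    = {block j off, block j (Suc (mid j off))}"
proof -
  have "block (Suc j) off - {mid j off} = block j off \<union> block j (Suc (mid j off))"
    by (auto simp: block_Suc)
  moreover have "comps (block_edges K 0) (block j off \<union> block j (Suc (mid j off)))
    = comps (block_edges K 0) (block j off) \<union> comps (block_edges K 0) (block j (Suc (mid j off)))"
    using left_right_disjoint no_edge_left_right[OF assms] by (intro comps_Un_no_edges) auto
  ultimately show ?thesis
    using comps_subblock subblock.left[OF assms] subblock.right[OF assms] by (simp add: insert_commute)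
qed

lemma mid_right_connected:
  assumes blk: "subblock a K (Suc j) off s"
  defines "S \<equiv> insert (mid j off) (block j (Suc (mid j off)))"
  shows "\<forall>x\<in>S. \<forall>y\<in>S. (x, y) \<in> (adj (block_edges K 0) S)\<^sup>*"
proof -
  let ?m = "mid j off" and ?o = "Suc (mid j off)"
  let ?r = "adj (block_edges K 0) S"
  have "(adj (block_edges K 0) (block j ?o))\<^sup>* \<subseteq> ?r\<^sup>*"
    unfolding S_def by (intro rtrancl_mono adj_mono) auto
  then have right: "(?o, y) \<in> ?r\<^sup>*" if "y \<in> block j ?o" for y
    using subblock_connected[OF subblock.right[OF blk]] that offset_in_block by blast
  have "{?m, ?o} \<in> block_edges K 0" using subblock_subset[OF blk] by auto
  then have "(?m, ?o) \<in> ?r" unfolding adj_def S_def by auto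
  then have "(?m, y) \<in> ?r\<^sup>*" if "y \<in> S" for y
    using that right unfolding S_def by (auto intro: converse_rtrancl_into_rtrancl)
  then show ?thesis by (intro connected_if_reaches_all ballI)
qed

fun centroid_stree :: "nat \<Rightarrow> nat \<Rightarrow> nat stree" where
  "centroid_stree 0 off = Node off []"
| "centroid_stree (Suc j) off =
     Node (mid j off) [centroid_stree j off, centroid_stree j (Suc (mid j off))]"

text \<open>The search tree that always queries the first vertex of a block: without \<open>off\<close>, the
  middle vertex stays attached to the right copy, and that component is queried next at the
  first vertex of the right copy.\<close>

fun first_forest :: "nat \<Rightarrow> nat \<Rightarrow> nat stree list" where
  "first_forest 0 off = []"
| "first_forest (Suc j) off = first_forest j off @
     [Node (Suc (mid j off)) (first_forest j (Suc (mid j off)) @ [Node (mid j off) []])]"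

abbreviation first_stree :: "nat \<Rightarrow> nat \<Rightarrow> nat stree" where
  "first_stree j off \<equiv> Node off (first_forest j off)"

lemma verts_centroid_stree: "verts (centroid_stree j off) = block j off"
  by (induction j arbitrary: off) (auto simp: block_Suc block_def)

lemma verts_first_stree: "verts (first_stree j off) = block j off"
proof (induction j arbitrary: off)
  case (Suc j)
  have "verts (first_stree (Suc j) off)
    = verts (first_stree j off) \<union> verts (first_stree j (Suc (mid j off))) \<union> {mid j off}"
    by auto
  then show ?case unfolding Suc.IH block_Suc by blast
qed (simp add: block_def)

lemma centroid_stree_search_tree:
  "subblock a K j off s \<Longrightarrow> is_search_tree (block_edges K 0) (block j off) (centroid_stree j off)"
proof (induction j arbitrary: off s)
  case (Suc j)
  have "block j off \<noteq> block j (Suc (mid j off))"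
    using offset_in_block[of off j] offset_notin_right[of off j] by blast
  then show ?case
    using comps_subblock_minus_mid[OF Suc.prems] verts_centroid_stree
      Suc.IH[OF subblock.left[OF Suc.prems]] Suc.IH[OF subblock.right[OF Suc.prems]]
    by (auto simp: block_Suc)
qed (simp add: block_def)

lemma first_stree_search_tree:
  "subblock a K j off s \<Longrightarrow> is_search_tree (block_edges K 0) (block j off) (first_stree j off)"
proof (induction j arbitrary: off s)
  case (Suc j)
  let ?m = "mid j off" and ?o = "Suc (mid j off)" and ?E = "block_edges K 0"
  let ?X = "Node ?o (first_forest j ?o @ [Node ?m []])"
  note blk = Suc.prems
  have L: "is_search_tree ?E (block j off) (first_stree j off)"
    and R: "is_search_tree ?E (block j ?o) (first_stree j ?o)"
    using Suc.IH subblock.left[OF blk] subblock.right[OF blk] by blast+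
  have "comps ?E ((block j ?o - {?o}) \<union> {?m}) = comps ?E (block j ?o - {?o}) \<union> comps ?E {?m}"
    using no_edge_right_mid[OF blk] by (intro comps_Un_no_edges) auto
  moreover have "insert ?m (block j ?o) - {?o} = (block j ?o - {?o}) \<union> {?m}" by auto
  moreover have "{?m} \<notin> comps ?E (block j ?o - {?o})"
    using comps_subset mid_notin_right[of off j] by blast
  ultimately have X: "is_search_tree ?E (insert ?m (block j ?o)) ?X"
    using R by auto
  have "comps ?E ((block j off - {off}) \<union> insert ?m (block j ?o))
    = comps ?E (block j off - {off}) \<union> comps ?E (insert ?m (block j ?o))"
    using left_right_disjoint[of j off] no_edge_left_mid_right[OF blk]
    by (intro comps_Un_no_edges) auto
  moreover have "comps ?E (insert ?m (block j ?o)) = {insert ?m (block j ?o)}"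
    using mid_right_connected[OF blk] by (intro comps_eq_singleton) auto
  moreover have "block (Suc j) off - {off} = (block j off - {off}) \<union> insert ?m (block j ?o)"
    using offset_notin_right[of off j] block_size_pos[of j] by (auto simp: block_Suc)
  moreover have "insert ?m (block j ?o) \<notin> comps ?E (block j off - {off})"
    using comps_subset mid_notin_left[of off j] by blast
  ultimately show ?case
    using L X search_tree_verts[OF X] by (auto simp: block_Suc)
qed (simp add: block_def)

lemma block_weight_Suc_fun:
  "block_weight a (Suc j) off s
    = (\<lambda>x. block_weight a j off (a * s) x + block_weight a j (Suc (mid j off)) ((1 - a) * s) x)"
  by (rule ext) simp

lemma cost_centroid_stree:
  "cost (block_weight a j off s) (centroid_stree j off) = s * (1 + real j)
   \<and> tree_weight (block_weight a j off s) (centroid_stree j off) = s"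
proof (induction j arbitrary: off s)
  case (Suc j)
  let ?m = "mid j off" and ?o = "Suc (mid j off)" and ?T = "centroid_stree (Suc j) off"
  let ?wl = "block_weight a j off (a * s)" and ?wr = "block_weight a j ?o ((1 - a) * s)"
  have zl: "\<forall>x\<in>verts (centroid_stree j ?o). ?wl x = 0" "?wl ?m = 0"
    and zr: "\<forall>x\<in>verts (centroid_stree j off). ?wr x = 0" "?wr ?m = 0"
    unfolding verts_centroid_stree using left_right_disjoint[of j off]
    by (auto intro!: block_weight_outside)
  have "cost ?wl ?T = a * s * (1 + real j) + a * s" "tree_weight ?wl ?T = a * s"
    "cost ?wr ?T = (1 - a) * s * (1 + real j) + (1 - a) * s" "tree_weight ?wr ?T = (1 - a) * s"
    using Suc.IH[of off "a * s"] Suc.IH[of ?o "(1 - a) * s"] zl(2) zr(2)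
      cost_eq_0[OF zl(1)] tree_weight_eq_0[OF zl(1)] cost_eq_0[OF zr(1)] tree_weight_eq_0[OF zr(1)]
    by (simp_all add: cost_Node tree_weight_Node)
  then show ?case
    unfolding block_weight_Suc_fun cost_add tree_weight_add by (simp add: algebra_simps)
qed (simp add: cost_Node tree_weight_Node)

lemma cost_first_stree:
  "cost (block_weight a j off s) (first_stree j off) = s * (1 + real j * (1 - a))
   \<and> tree_weight (block_weight a j off s) (first_stree j off) = s"
proof (induction j arbitrary: off s)
  case (Suc j)
  let ?m = "mid j off" and ?o = "Suc (mid j off)" and ?T = "first_stree (Suc j) off"
  let ?X = "Node ?o (first_forest j ?o @ [Node ?m []])"
  let ?wl = "block_weight a j off (a * s)" and ?wr = "block_weight a j ?o ((1 - a) * s)"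
  have "verts ?X = insert ?m (block j ?o)"
    using verts_first_stree[where j = j and off = ?o] by auto
  then have zl: "\<forall>x\<in>verts ?X. ?wl x = 0"
    and zr: "\<forall>x\<in>verts (first_stree j off). ?wr x = 0" "?wr ?m = 0"
    unfolding verts_first_stree using left_right_disjoint[of j off]
    by (auto intro!: block_weight_outside)
  have "cost ?wl ?T = a * s * (1 + real j * (1 - a))" "tree_weight ?wl ?T = a * s"
    "cost ?wr ?T = (1 - a) * s * (1 + real j * (1 - a)) + (1 - a) * s"
    "tree_weight ?wr ?T = (1 - a) * s"
    using Suc.IH[of off "a * s"] Suc.IH[of ?o "(1 - a) * s"] zr(2)
      cost_eq_0[OF zl] tree_weight_eq_0[OF zl] cost_eq_0[OF zr(1)] tree_weight_eq_0[OF zr(1)]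
    by (simp_all add: cost_snoc tree_weight_snoc cost_Node tree_weight_Node)
  then show ?case
    unfolding block_weight_Suc_fun cost_add tree_weight_add by (simp add: algebra_simps)
qed (simp add: cost_Node tree_weight_Node)

lemma centroid_stree_centroid:
  assumes "1/2 \<le> a" "a \<le> 1" "subblock a K j off s" "u \<in> set (subtrees (centroid_stree j off))"
  shows "is_centroid a (block_edges K 0) (block_weight a K 0 1) (verts u) (root u)"
  using assms(3,4)
proof (induction j arbitrary: off s)
  case 0
  then show ?case by (simp add: is_centroid_def)
next
  case (Suc j)
  note blk = Suc.prems(1)
  have "0 \<le> s" using subblock_scale_nonneg[OF blk] assms(1,2) by auto
  then have "(1 - a) * s \<le> a * s" using assms(1) by (intro mult_right_mono) auto
  then have "is_centroid a (block_edges K 0) (block_weight a K 0 1) (block (Suc j) off) (mid j off)"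
    unfolding is_centroid_def comps_subblock_minus_mid[OF blk]
    using wsum_subblock[OF blk] wsum_subblock[OF subblock.left[OF blk]]
      wsum_subblock[OF subblock.right[OF blk]]
    by (auto simp: block_Suc)
  then show ?case
    using Suc.prems(2) Suc.IH[OF subblock.left[OF blk]] Suc.IH[OF subblock.right[OF blk]]
      verts_centroid_stree[of "Suc j" off] by auto
qed

text \<open>Whatever the root of the search tree, one half of the block avoids it, so that half lies
  entirely below a child and its weight is paid once more. The right half is the lighter one,
  hence each level costs at least an extra \<open>(1 - a) s\<close>.\<close>
lemma cost_subblock_lower_bound:
  assumes a: "1/2 \<le> a" "a \<le> 1"
    and "subblock a K j off s" "is_search_tree (block_edges K 0) S T" "finite S" "block j off \<subseteq> S"
  shows "s * (1 + real j * (1 - a)) \<le> cost (weight_on (block_weight a K 0 1) (block j off)) T"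
  using assms(3-6)
proof (induction j arbitrary: off s S T)
  let ?w = "block_weight a K 0 1"
  have w: "\<forall>x. 0 \<le> ?w x" using a block_weight_nonneg by auto
  {
    case 0
    then show ?case using wsum_le_cost_weight_on[OF 0(2,3) w 0(4)] wsum_subblock[OF 0(1)] by simp
  next
    case (Suc j)
    let ?m = "mid j off" and ?o = "Suc (mid j off)"
    let ?c = "\<lambda>B. cost (weight_on ?w B) T"
    obtain r ts where T: "T = Node r ts" by (cases T)
    note L = subblock.left[OF Suc.prems(1)] and R = subblock.right[OF Suc.prems(1)]
    have sub: "block j off \<subseteq> S" "block j ?o \<subseteq> S" using Suc.prems(4) by (auto simp: block_Suc)
    have sinks: "s' * (1 + real j * (1 - a)) + s' \<le> ?c (block j off')"
      if blk: "subblock a K j off' s'" and "block j off' \<subseteq> S" "r \<notin> block j off'" for off' s'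
      using cost_weight_on_root_notin[OF Suc.prems(2)[unfolded T] Suc.prems(3) w that(2,3)
          offset_in_block subblock_connected[OF blk] Suc.IH[OF blk]]
      unfolding wsum_subblock[OF blk] T .
    have "(block j off \<union> {?m}) \<inter> block j ?o = {}" "block j off \<inter> {?m} = {}"
      using left_right_disjoint[of j off] by auto
    then have split: "?c (block (Suc j) off) = ?c (block j off) + ?c {?m} + ?c (block j ?o)"
      unfolding block_Suc by (simp only: cost_weight_on_Un)
    have mid: "0 \<le> ?c {?m}" by (rule cost_nonneg[OF weight_on_nonneg[OF w]])
    have "0 \<le> s" using subblock_scale_nonneg[OF Suc.prems(1)] a by auto
    then have right_lighter: "(1 - a) * s \<le> a * s" using a by (intro mult_right_mono) auto
    have target: "s * (1 + real (Suc j) * (1 - a))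
      = a * s * (1 + real j * (1 - a)) + (1 - a) * s * (1 + real j * (1 - a)) + (1 - a) * s"
      by (simp add: algebra_simps)
    note IH = Suc.IH[OF L Suc.prems(2,3) sub(1)] Suc.IH[OF R Suc.prems(2,3) sub(2)]
    have "r \<notin> block j off \<or> r \<notin> block j ?o" using left_right_disjoint[of j off] by blast
    then show ?case
    proof
      assume "r \<notin> block j off"
      then show ?case
        using sinks[OF L sub(1)] split mid right_lighter target IH by linarith
    next
      assume "r \<notin> block j ?o"
      then show ?case
        using sinks[OF R sub(2)] split mid target IH by linarith
    qed
  }
qed

lemma is_tree_instance: "is_tree (block n 0) (block_edges n 0)"
proof -
  have "block n 0 \<noteq> {}" using offset_in_block by blast
  then show ?thesis
    unfolding is_tree_def using block_edges_subset block_connected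
    by (simp add: card_block card_block_edges)
qed

lemma OPT_instance:
  assumes "1/2 \<le> a" "a \<le> 1"
  shows "OPT (block n 0) (block_edges n 0) (block_weight a n 0 1) = 1 + real n * (1 - a)"
  unfolding OPT_def
proof (rule cInf_eq_minimum)
  let ?w = "block_weight a n 0 1"
  have "is_search_tree (block_edges n 0) (block n 0) (first_stree n 0)"
    by (rule first_stree_search_tree[OF subblock.top[of a n]])
  moreover have "cost ?w (first_stree n 0) = 1 + real n * (1 - a)"
    using cost_first_stree[of a n 0 1] by simp
  ultimately show "1 + real n * (1 - a) \<in> {cost ?w T | T. is_search_tree (block_edges n 0) (block n 0) T}"
    by (metis (mono_tags, lifting) mem_Collect_eq)
  fix c assume "c \<in> {cost ?w T | T. is_search_tree (block_edges n 0) (block n 0) T}"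
  then obtain T where T: "is_search_tree (block_edges n 0) (block n 0) T" and c: "c = cost ?w T"
    by blast
  have "1 + real n * (1 - a) \<le> cost (weight_on ?w (block n 0)) T"
    using cost_subblock_lower_bound[OF assms subblock.top T] by simp
  also have "\<dots> = c"
    unfolding c using search_tree_verts[OF T] by (intro cost_cong) (simp add: weight_on_def)
  finally show "1 + real n * (1 - a) \<le> c" .
qed

lemma cent_instance_lower_bound:
  assumes "1/2 \<le> a" "a \<le> 1"
  shows "1 + real n \<le> cent a (block n 0) (block_edges n 0) (block_weight a n 0 1)"
proof -
  let ?w = "block_weight a n 0 1"
  let ?C = "{cost ?w T | T. is_centroid_tree a (block_edges n 0) ?w (block n 0) T}"
  have "\<forall>u\<in>set (subtrees (centroid_stree n 0)).
      is_centroid a (block_edges n 0) ?w (verts u) (root u)"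
    using centroid_stree_centroid[OF assms subblock.top[of a n]] by blast
  then have "is_centroid_tree a (block_edges n 0) ?w (block n 0) (centroid_stree n 0)"
    unfolding is_centroid_tree_def using centroid_stree_search_tree[OF subblock.top[of a n]] by blast
  moreover have "cost ?w (centroid_stree n 0) = 1 + real n"
    using cost_centroid_stree[of a n 0 1] by simp
  ultimately have mem: "1 + real n \<in> ?C" by (metis (mono_tags, lifting) mem_Collect_eq)
  have "bdd_above ?C"
  proof (rule bdd_aboveI)
    fix c assume "c \<in> ?C"
    then obtain T where T: "is_search_tree (block_edges n 0) (block n 0) T" and c: "c = cost ?w T"
      unfolding is_centroid_tree_def by blast
    have "\<forall>x. 0 \<le> ?w x" using block_weight_nonneg assms by simp
    then have "c \<le> real (card (block n 0)) * wsum ?w (block n 0)"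
      unfolding c by (rule cost_le_card_mult_wsum[OF T finite_block])
    then show "c \<le> real (card (block n 0))" by (simp add: wsum_def sum_block_weight)
  qed
  then have "1 + real n \<le> Sup ?C" using mem by (rule cSup_upper[rotated])
  moreover have "?C \<noteq> {}" using mem by blast
  ultimately show ?thesis unfolding cent_def Let_def by simp
qed

lemma cent_ge_OPT_instance:
  assumes "1/2 \<le> a" "a < 1"
  shows "1 / (1 - a) * OPT (block n 0) (block_edges n 0) (block_weight a n 0 1) - a / (1 - a)
    \<le> cent a (block n 0) (block_edges n 0) (block_weight a n 0 1)"
proof -
  have "1 / (1 - a) * (1 + real n * (1 - a)) - a / (1 - a) = (1 - a) * (1 + real n) / (1 - a)"
    by (simp add: diff_divide_distrib[symmetric] algebra_simps)
  also have "\<dots> = 1 + real n" using assms(2) by simp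
  finally show ?thesis
    using OPT_instance[OF assms(1)] cent_instance_lower_bound[OF assms(1)] assms(2) by simp
qed

lemma OPT_instance_at_top:
  assumes "1/2 \<le> a" "a < 1"
  shows "filterlim (\<lambda>n. OPT (block n 0) (block_edges n 0) (block_weight a n 0 1)) at_top sequentially"
proof -
  have "filterlim (\<lambda>n. 1 + real n * (1 - a)) at_top sequentially"
    using assms(2)
    by (intro filterlim_tendsto_add_at_top[OF tendsto_const]
        filterlim_at_top_mult_tendsto_pos[OF tendsto_const] filterlim_real_sequentially) simp
  then show ?thesis using OPT_instance[OF assms(1)] assms(2) by simp
qed

theorem theorem8:
  fixes \<alpha> :: real
  assumes "1/2 \<le> \<alpha>" and "\<alpha> < 1"
  shows "\<exists>(V :: nat \<Rightarrow> nat set) (E :: nat \<Rightarrow> nat set set) (w :: nat \<Rightarrow> nat \<Rightarrow> real).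
    (\<forall>n. is_tree (V n) (E n) \<and> (\<forall>x\<in>V n. 0 \<le> w n x) \<and> wsum (w n) (V n) = 1 \<and>
         cent \<alpha> (V n) (E n) (w n) \<ge> 1 / (1 - \<alpha>) * OPT (V n) (E n) (w n) - \<alpha> / (1 - \<alpha>)) \<and>
    filterlim (\<lambda>n. OPT (V n) (E n) (w n)) at_top sequentially"
proof (intro exI conjI allI)
  fix n
  show "is_tree (block n 0) (block_edges n 0)" by (rule is_tree_instance)
  show "\<forall>x\<in>block n 0. 0 \<le> block_weight \<alpha> n 0 1 x" using block_weight_nonneg assms by auto
  show "wsum (block_weight \<alpha> n 0 1) (block n 0) = 1" unfolding wsum_def by (rule sum_block_weight)
  show "cent \<alpha> (block n 0) (block_edges n 0) (block_weight \<alpha> n 0 1)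
    \<ge> 1 / (1 - \<alpha>) * OPT (block n 0) (block_edges n 0) (block_weight \<alpha> n 0 1) - \<alpha> / (1 - \<alpha>)"
    using cent_ge_OPT_instance[OF assms] by simp
next
  show "filterlim (\<lambda>n. OPT (block n 0) (block_edges n 0) (block_weight \<alpha> n 0 1)) at_top sequentially"
    by (rule OPT_instance_at_top[OF assms])
qed

end
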